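(* The category $\boxplus$ is a generalized Reedy category with $\boxplus^-$ the wide subcategory of surjective $\boxplus$-morphisms, $\boxplus^+$ the wide subcategory of injective $\boxplus$-morphisms, and $\deg([1]^n)=n$ for $n=0,1,2,\dots$.
   Context: $[1]=\{0<1\}$, $[1]^n$ the product poset ($[1]^0=[0]$). An interval in a poset is a non-empty subset $[x,z]=\{y:x\leq y\leq z\}$. $\boxplus$ is the category whose objects are the $[1]^n$ ($n\geq0$) and whose morphisms are the monotone functions mapping every interval onto an interval. A generalized Reedy category is a small category $\mathcal{S}$ with wide subcategories $\mathcal{S}^-,\mathcal{S}^+$ and a function $\deg$ from objects to $\mathbb{N}$ such that: (i) $\mathcal{S}^-\cap\mathcal{S}^+$ is the core (groupoid of isomorphisms) of $\mathcal{S}$; (ii) for each $\mathcal{S}^-$-morphism $o_1\to o_2$, $\deg(o_1)\geq\deg(o_2)$; (iii) for each $\mathcal{S}^+$-morphism $o_1\to o_2$, $\deg(o_1)\leq\deg(o_2)$; (iv) a morphism $o_1\to o_2$ in $\mathcal{S}^-$ or $\mathcal{S}^+$ lies in both if $\deg(o_1)=\deg(o_2)$; (v) for each $\mathcal{S}^-$-morphism $\zeta$, an isomorphism $\gamma$ with $\gamma\zeta=\zeta$ is an identity; (vi) every $\mathcal{S}$-morphism factors as an $\mathcal{S}^-$-morphism followed by an $\mathcal{S}^+$-morphism, uniquely up to isomorphism. *)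

theory Defs
  imports Main "HOL-Library.FuncSet"
begin

text \<open>A small category is given by a set of objects Ob, hom-sets Hom a b,
  composition cmp a b c g f (meaning g after f, for f : a -> b, g : b -> c),
  and identities idm a.\<close>

definition is_category ::
  "'o set \<Rightarrow> ('o \<Rightarrow> 'o \<Rightarrow> 'm set) \<Rightarrow> ('o \<Rightarrow> 'o \<Rightarrow> 'o \<Rightarrow> 'm \<Rightarrow> 'm \<Rightarrow> 'm) \<Rightarrow> ('o \<Rightarrow> 'm) \<Rightarrow> bool" where
  "is_category Ob Hom cmp idm \<longleftrightarrow>
     (\<forall>a\<in>Ob. idm a \<in> Hom a a) \<and>
     (\<forall>a\<in>Ob. \<forall>b\<in>Ob. \<forall>c\<in>Ob. \<forall>f\<in>Hom a b. \<forall>g\<in>Hom b c. cmp a b c g f \<in> Hom a c) \<and>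
     (\<forall>a\<in>Ob. \<forall>b\<in>Ob. \<forall>f\<in>Hom a b. cmp a a b f (idm a) = f \<and> cmp a b b (idm b) f = f) \<and>
     (\<forall>a\<in>Ob. \<forall>b\<in>Ob. \<forall>c\<in>Ob. \<forall>d\<in>Ob. \<forall>f\<in>Hom a b. \<forall>g\<in>Hom b c. \<forall>h\<in>Hom c d.
        cmp a c d h (cmp a b c g f) = cmp a b d (cmp b c d h g) f)"

definition is_iso ::
  "('o \<Rightarrow> 'o \<Rightarrow> 'm set) \<Rightarrow> ('o \<Rightarrow> 'o \<Rightarrow> 'o \<Rightarrow> 'm \<Rightarrow> 'm \<Rightarrow> 'm) \<Rightarrow> ('o \<Rightarrow> 'm) \<Rightarrow> 'o \<Rightarrow> 'o \<Rightarrow> 'm \<Rightarrow> bool" where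
  "is_iso Hom cmp idm a b f \<longleftrightarrow> f \<in> Hom a b \<and>
     (\<exists>g\<in>Hom b a. cmp a b a g f = idm a \<and> cmp b a b f g = idm b)"

definition wide_subcat ::
  "'o set \<Rightarrow> ('o \<Rightarrow> 'o \<Rightarrow> 'm set) \<Rightarrow> ('o \<Rightarrow> 'o \<Rightarrow> 'o \<Rightarrow> 'm \<Rightarrow> 'm \<Rightarrow> 'm) \<Rightarrow> ('o \<Rightarrow> 'm)
    \<Rightarrow> ('o \<Rightarrow> 'o \<Rightarrow> 'm \<Rightarrow> bool) \<Rightarrow> bool" where
  "wide_subcat Ob Hom cmp idm S \<longleftrightarrow>
     (\<forall>a b f. S a b f \<longrightarrow> a \<in> Ob \<and> b \<in> Ob \<and> f \<in> Hom a b) \<and>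
     (\<forall>a\<in>Ob. S a a (idm a)) \<and>
     (\<forall>a b c f g. S a b f \<longrightarrow> S b c g \<longrightarrow> S a c (cmp a b c g f))"

definition gen_reedy ::
  "'o set \<Rightarrow> ('o \<Rightarrow> 'o \<Rightarrow> 'm set) \<Rightarrow> ('o \<Rightarrow> 'o \<Rightarrow> 'o \<Rightarrow> 'm \<Rightarrow> 'm \<Rightarrow> 'm) \<Rightarrow> ('o \<Rightarrow> 'm)
    \<Rightarrow> ('o \<Rightarrow> 'o \<Rightarrow> 'm \<Rightarrow> bool) \<Rightarrow> ('o \<Rightarrow> 'o \<Rightarrow> 'm \<Rightarrow> bool) \<Rightarrow> ('o \<Rightarrow> nat) \<Rightarrow> bool" where
  "gen_reedy Ob Hom cmp idm Mn Pl deg \<longleftrightarrow>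
     is_category Ob Hom cmp idm \<and>
     wide_subcat Ob Hom cmp idm Mn \<and> wide_subcat Ob Hom cmp idm Pl \<and>
     \<comment> \<open>(i)\<close>
     (\<forall>a\<in>Ob. \<forall>b\<in>Ob. \<forall>f. (Mn a b f \<and> Pl a b f) \<longleftrightarrow> is_iso Hom cmp idm a b f) \<and>
     \<comment> \<open>(ii)\<close>
     (\<forall>a b f. Mn a b f \<longrightarrow> deg b \<le> deg a) \<and>
     \<comment> \<open>(iii)\<close>
     (\<forall>a b f. Pl a b f \<longrightarrow> deg a \<le> deg b) \<and>
     \<comment> \<open>(iv)\<close>
     (\<forall>a b f. (Mn a b f \<or> Pl a b f) \<longrightarrow> deg a = deg b \<longrightarrow> (Mn a b f \<and> Pl a b f)) \<and>
     \<comment> \<open>(v)\<close>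
     (\<forall>a b z g. Mn a b z \<longrightarrow> is_iso Hom cmp idm b b g \<longrightarrow> cmp a b b g z = z \<longrightarrow> g = idm b) \<and>
     \<comment> \<open>(vi) existence\<close>
     (\<forall>a\<in>Ob. \<forall>c\<in>Ob. \<forall>f\<in>Hom a c. \<exists>b\<in>Ob. \<exists>p i. Mn a b p \<and> Pl b c i \<and> cmp a b c i p = f) \<and>
     \<comment> \<open>(vi) uniqueness up to isomorphism\<close>
     (\<forall>a c b b' p i p' i'. Mn a b p \<longrightarrow> Pl b c i \<longrightarrow> Mn a b' p' \<longrightarrow> Pl b' c i' \<longrightarrow>
        cmp a b c i p = cmp a b' c i' p' \<longrightarrow>
        (\<exists>\<theta>. is_iso Hom cmp idm b b' \<theta> \<and> cmp a b b' \<theta> p = p' \<and> cmp b b' c i' \<theta> = i))"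

text \<open>The poset [1]^n: bool lists of length n, ordered componentwise (False < True).\<close>
definition cube :: "nat \<Rightarrow> bool list set" where
  "cube n = {xs. length xs = n}"

definition cleq :: "bool list \<Rightarrow> bool list \<Rightarrow> bool" where
  "cleq xs ys \<longleftrightarrow> list_all2 (\<le>) xs ys"

definition cinterval :: "nat \<Rightarrow> bool list \<Rightarrow> bool list \<Rightarrow> bool list set" where
  "cinterval n x z = {y \<in> cube n. cleq x y \<and> cleq y z}"

definition is_interval :: "nat \<Rightarrow> bool list set \<Rightarrow> bool" where
  "is_interval n S \<longleftrightarrow> (\<exists>x\<in>cube n. \<exists>z\<in>cube n. cleq x z \<and> S = cinterval n x z)"

text \<open>Morphisms [1]^n -> [1]^m: monotone maps sending every interval onto an interval,
  represented extensionally (undefined outside cube n).\<close>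
definition box_hom :: "nat \<Rightarrow> nat \<Rightarrow> (bool list \<Rightarrow> bool list) set" where
  "box_hom n m = {f \<in> cube n \<rightarrow>\<^sub>E cube m.
     (\<forall>x\<in>cube n. \<forall>y\<in>cube n. cleq x y \<longrightarrow> cleq (f x) (f y)) \<and>
     (\<forall>S. is_interval n S \<longrightarrow> is_interval m (f ` S))}"

definition box_comp :: "nat \<Rightarrow> nat \<Rightarrow> nat \<Rightarrow> (bool list \<Rightarrow> bool list) \<Rightarrow> (bool list \<Rightarrow> bool list) \<Rightarrow> (bool list \<Rightarrow> bool list)" where
  "box_comp a b c g f = compose (cube a) g f"

definition box_id :: "nat \<Rightarrow> (bool list \<Rightarrow> bool list)" where
  "box_id a = restrict (\<lambda>x. x) (cube a)"

definition box_surj :: "nat \<Rightarrow> nat \<Rightarrow> (bool list \<Rightarrow> bool list) \<Rightarrow> bool" where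
  "box_surj a b f \<longleftrightarrow> f \<in> box_hom a b \<and> f ` cube a = cube b"

definition box_inj :: "nat \<Rightarrow> nat \<Rightarrow> (bool list \<Rightarrow> bool list) \<Rightarrow> bool" where
  "box_inj a b f \<longleftrightarrow> f \<in> box_hom a b \<and> inj_on f (cube a)"

end

theory Submission
  imports Defs
begin

(* A box morphism f maps [1]^a onto the interval [f 0, f 1], and an interval [x, z] of [1]^c is
   itself a cube [1]^k, k being the number of coordinates in which x and z differ.  Hence f
   factors as a surjection onto [x, z] followed by the inclusion of this face.  Injective box
   morphisms are order embeddings onto intervals, so the inverse of one on its image composes
   with box morphisms to box morphisms; this identifies the isomorphisms with the bijective
   morphisms and relates any two factorizations of f by an isomorphism.  The degree conditions
   are counting arguments, [1]^n having 2^n elements. *)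

lemma cleq_iff_nth: "cleq x y \<longleftrightarrow> length x = length y \<and> (\<forall>i<length x. x!i \<le> y!i)"
  unfolding cleq_def by (simp add: list_all2_conv_all_nth)

lemma cleq_refl [simp]: "cleq x x"
  by (simp add: cleq_iff_nth)

lemma cleq_trans: "cleq x y \<Longrightarrow> cleq y z \<Longrightarrow> cleq x z"
  by (auto simp: cleq_iff_nth)

lemma cleq_antisym: "cleq x y \<Longrightarrow> cleq y x \<Longrightarrow> x = y"
  by (auto simp: cleq_iff_nth intro: nth_equalityI)

lemma cleq_Cons [simp]: "cleq (a # x) (b # y) \<longleftrightarrow> a \<le> b \<and> cleq x y"
  by (simp add: cleq_def)

lemma cleq_Nil_left [simp]: "cleq [] y \<longleftrightarrow> y = []"
  by (simp add: cleq_def)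

lemma cleq_Nil_right [simp]: "cleq x [] \<longleftrightarrow> x = []"
  by (simp add: cleq_def)

lemma cleq_length: "cleq x y \<Longrightarrow> length x = length y"
  by (simp add: cleq_iff_nth)

lemma finite_cube: "finite (cube n)"
  using finite_lists_length_eq[of "UNIV :: bool set" n] by (simp add: cube_def)

lemma card_cube: "card (cube n) = 2 ^ n"
  using card_lists_length_eq[of "UNIV :: bool set" n] by (simp add: cube_def)

lemma cube_eq_cinterval: "cube n = cinterval n (replicate n False) (replicate n True)"
  by (auto simp: cinterval_def cube_def cleq_iff_nth)

lemma cinterval_subset_cube: "cinterval n x z \<subseteq> cube n"
  by (auto simp: cinterval_def)

lemma cinterval_subset_cinterval:
  "u \<in> cinterval n x z \<Longrightarrow> v \<in> cinterval n x z \<Longrightarrow> cinterval n u v \<subseteq> cinterval n x z"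
  by (auto simp: cinterval_def intro: cleq_trans)

lemma left_mem_cinterval: "x \<in> cube n \<Longrightarrow> cleq x z \<Longrightarrow> x \<in> cinterval n x z"
  by (simp add: cinterval_def)

lemma right_mem_cinterval: "z \<in> cube n \<Longrightarrow> cleq x z \<Longrightarrow> z \<in> cinterval n x z"
  by (simp add: cinterval_def)

section \<open>Box morphisms as interval-preserving maps\<close>

definition order_embedding_on :: "bool list set \<Rightarrow> (bool list \<Rightarrow> bool list) \<Rightarrow> bool" where
  "order_embedding_on A h \<longleftrightarrow> (\<forall>x\<in>A. \<forall>y\<in>A. cleq (h x) (h y) \<longleftrightarrow> cleq x y)"

lemma order_embedding_on_inj_on: "order_embedding_on A h \<Longrightarrow> inj_on h A"
  unfolding order_embedding_on_def by (metis cleq_antisym cleq_refl inj_onI)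

lemma order_embedding_on_inv_into:
  assumes "order_embedding_on A h"
  shows "order_embedding_on (h ` A) (inv_into A h)"
  using assms order_embedding_on_inj_on[OF assms]
  unfolding order_embedding_on_def by (auto simp: inv_into_f_f)

lemma order_embedding_image_cinterval:
  assumes h: "order_embedding_on A h" and "A \<subseteq> cube n" "h ` A \<subseteq> cube m"
    and "u \<in> A" "v \<in> A" "cinterval n u v \<subseteq> A" "cinterval m (h u) (h v) \<subseteq> h ` A"
  shows "h ` cinterval n u v = cinterval m (h u) (h v)"
proof
  show "h ` cinterval n u v \<subseteq> cinterval m (h u) (h v)"
    using assms unfolding order_embedding_on_def cinterval_def by blast
  show "cinterval m (h u) (h v) \<subseteq> h ` cinterval n u v"
  proof
    fix y assume y: "y \<in> cinterval m (h u) (h v)"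
    then obtain w where "w \<in> A" "y = h w" using assms by blast
    with y show "y \<in> h ` cinterval n u v"
      using assms unfolding order_embedding_on_def cinterval_def by blast
  qed
qed

lemma box_homD:
  assumes "f \<in> box_hom n m"
  shows "f \<in> cube n \<rightarrow>\<^sub>E cube m"
    and "\<And>x y. x \<in> cube n \<Longrightarrow> y \<in> cube n \<Longrightarrow> cleq x y \<Longrightarrow> cleq (f x) (f y)"
    and "\<And>S. is_interval n S \<Longrightarrow> is_interval m (f ` S)"
  using assms by (auto simp: box_hom_def)

lemma box_hom_image_cinterval:
  assumes f: "f \<in> box_hom n m" and st: "s \<in> cube n" "t \<in> cube n" "cleq s t"
  shows "f ` cinterval n s t = cinterval m (f s) (f t)"
proof -
  obtain u v where uv: "u \<in> cube m" "v \<in> cube m" "cleq u v"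
    and eq: "f ` cinterval n s t = cinterval m u v"
    using box_homD(3)[OF f] st unfolding is_interval_def by blast
  have "s \<in> cinterval n s t" "t \<in> cinterval n s t"
    using st by (simp_all add: left_mem_cinterval right_mem_cinterval)
  then have "f s \<in> cinterval m u v" "f t \<in> cinterval m u v"
    unfolding eq[symmetric] by simp_all
  then have "cleq u (f s)" "cleq (f t) v" by (simp_all add: cinterval_def)
  have "u \<in> f ` cinterval n s t" "v \<in> f ` cinterval n s t"
    unfolding eq using uv by (simp_all add: left_mem_cinterval right_mem_cinterval)
  then have "cleq (f s) u" "cleq v (f t)"
    using box_homD(2)[OF f] st cinterval_subset_cube by (auto simp: cinterval_def)
  with \<open>cleq u (f s)\<close> \<open>cleq (f t) v\<close> have "u = f s" "v = f t" by (simp_all add: cleq_antisym)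
  with eq show ?thesis by simp
qed

lemma box_hom_iff:
  "f \<in> box_hom n m \<longleftrightarrow> f \<in> cube n \<rightarrow>\<^sub>E cube m \<and>
     (\<forall>s\<in>cube n. \<forall>t\<in>cube n. cleq s t \<longrightarrow> f ` cinterval n s t = cinterval m (f s) (f t))"
  (is "_ \<longleftrightarrow> ?fun \<and> ?img")
proof
  assume "f \<in> box_hom n m"
  then show "?fun \<and> ?img" using box_homD(1) box_hom_image_cinterval by simp
next
  assume f: "?fun \<and> ?img"
  have mono: "cleq (f s) (f t)" if st: "s \<in> cube n" "t \<in> cube n" "cleq s t" for s t
  proof -
    have "f s \<in> f ` cinterval n s t" using st by (simp add: left_mem_cinterval)
    with f st show ?thesis by (simp add: cinterval_def)
  qed
  have "is_interval m (f ` S)" if "is_interval n S" for S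
  proof -
    obtain s t where st: "s \<in> cube n" "t \<in> cube n" "cleq s t" and S: "S = cinterval n s t"
      using \<open>is_interval n S\<close> unfolding is_interval_def by blast
    have "f s \<in> cube m" "f t \<in> cube m" using f st by auto
    moreover have "cleq (f s) (f t)" using mono st by blast
    moreover have "f ` S = cinterval m (f s) (f t)" using f st S by blast
    ultimately show ?thesis unfolding is_interval_def by blast
  qed
  with f mono show "f \<in> box_hom n m" unfolding box_hom_def by blast
qed

lemma box_hom_image:
  "f \<in> box_hom a c \<Longrightarrow> f ` cube a = cinterval c (f (replicate a False)) (f (replicate a True))"
  unfolding cube_eq_cinterval[of a]
  by (rule box_hom_image_cinterval) (auto simp: cube_def cleq_iff_nth)

lemma box_hom_of_order_embedding:
  assumes h: "h \<in> cube n \<rightarrow>\<^sub>E cube m" "order_embedding_on (cube n) h"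
    and img: "h ` cube n = cinterval m x z"
  shows "h \<in> box_hom n m"
  unfolding box_hom_iff
proof (intro conjI ballI impI h(1))
  fix s t assume st: "s \<in> cube n" "t \<in> cube n" "cleq s t"
  then have "h s \<in> cinterval m x z" "h t \<in> cinterval m x z" using img by blast+
  then show "h ` cinterval n s t = cinterval m (h s) (h t)"
    using h(2) img st by (intro order_embedding_image_cinterval[where A = "cube n"])
      (simp_all add: cinterval_subset_cube cinterval_subset_cinterval)
qed

lemma box_inj_order_embedding:
  assumes "box_inj n m f"
  shows "order_embedding_on (cube n) f"
  unfolding order_embedding_on_def
proof (intro ballI iffI)
  fix x y assume x: "x \<in> cube n" and y: "y \<in> cube n" and le: "cleq (f x) (f y)"
  have f: "f \<in> box_hom n m" and inj: "inj_on f (cube n)"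
    using assms by (auto simp: box_inj_def)
  define one where "one = replicate n True"
  have one: "one \<in> cube n" "cleq x one" "cleq y one"
    using x y by (auto simp: one_def cube_def cleq_iff_nth)
  have "f y \<in> cube m" "cleq (f y) (f one)"
    using box_homD(1,2)[OF f] y one by auto
  with le have "f y \<in> cinterval m (f x) (f one)" by (simp add: cinterval_def)
  also have "\<dots> = f ` cinterval n x one"
    using box_hom_image_cinterval[OF f x one(1,2)] by simp
  finally obtain w where "w \<in> cinterval n x one" "f y = f w" by blast
  then have "w \<in> cube n" "cleq x w" "f y = f w" by (simp_all add: cinterval_def)
  with inj y show "cleq x y" by (metis inj_onD)
next
  fix x y assume "x \<in> cube n" "y \<in> cube n" "cleq x y"
  then show "cleq (f x) (f y)" using assms box_homD(2) by (auto simp: box_inj_def)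
qed

lemma box_comp_apply: "x \<in> cube a \<Longrightarrow> box_comp a b c g f x = g (f x)"
  unfolding box_comp_def by (rule compose_eq)

lemma box_id_apply: "x \<in> cube a \<Longrightarrow> box_id a x = x"
  unfolding box_id_def by simp

lemma box_comp_eqI:
  assumes "h \<in> extensional (cube a)" "\<And>x. x \<in> cube a \<Longrightarrow> g (f x) = h x"
  shows "box_comp a b c g f = h"
  unfolding box_comp_def
proof (rule extensionalityI[OF compose_extensional assms(1)])
  fix x assume "x \<in> cube a"
  then show "compose (cube a) g f x = h x" using assms(2) by (simp add: compose_eq)
qed

lemma box_comp_image: "box_comp a b c g f ` cube a = g ` f ` cube a"
proof -
  have "box_comp a b c g f ` cube a = (\<lambda>x. g (f x)) ` cube a"
    by (rule image_cong[OF refl]) (rule box_comp_apply)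
  then show ?thesis by (simp add: image_image)
qed

lemma box_hom_extensional: "f \<in> box_hom a b \<Longrightarrow> f \<in> extensional (cube a)"
  using box_homD(1) by (simp add: PiE_def)

lemma box_hom_eqI:
  assumes "f \<in> box_hom a b" "g \<in> box_hom a b" "\<And>x. x \<in> cube a \<Longrightarrow> f x = g x"
  shows "f = g"
  using assms by (intro extensionalityI[OF box_hom_extensional box_hom_extensional])

lemma box_id_hom: "box_id a \<in> box_hom a a"
proof (rule box_hom_of_order_embedding)
  show "box_id a \<in> cube a \<rightarrow>\<^sub>E cube a" by (simp add: box_id_def)
  show "order_embedding_on (cube a) (box_id a)" by (simp add: order_embedding_on_def box_id_apply)
  show "box_id a ` cube a = cinterval a (replicate a False) (replicate a True)"
    by (simp add: box_id_def cube_eq_cinterval[symmetric])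
qed

lemma box_comp_hom:
  assumes f: "f \<in> box_hom a b" and g: "g \<in> box_hom b c"
  shows "box_comp a b c g f \<in> box_hom a c"
  unfolding box_hom_iff
proof (intro conjI ballI impI)
  show "box_comp a b c g f \<in> cube a \<rightarrow>\<^sub>E cube c"
    using box_homD(1)[OF f] box_homD(1)[OF g] by (auto simp: box_comp_def compose_def PiE_iff)
  fix s t assume st: "s \<in> cube a" "t \<in> cube a" "cleq s t"
  then have "f s \<in> cube b" "f t \<in> cube b" "cleq (f s) (f t)" using box_homD[OF f] by auto
  then have "g ` f ` cinterval a s t = cinterval c (g (f s)) (g (f t))"
    using box_hom_image_cinterval[OF f st] box_hom_image_cinterval[OF g] by simp
  moreover have "box_comp a b c g f ` cinterval a s t = g ` f ` cinterval a s t"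
    using cinterval_subset_cube by (force simp: box_comp_apply)
  ultimately show "box_comp a b c g f ` cinterval a s t =
      cinterval c (box_comp a b c g f s) (box_comp a b c g f t)"
    using st by (simp add: box_comp_apply)
qed

lemma box_comp_id_left: "f \<in> box_hom a b \<Longrightarrow> box_comp a b b (box_id b) f = f"
  using box_homD(1) by (intro box_comp_eqI) (auto simp: box_id_apply PiE_iff)

lemma box_comp_id_right: "f \<in> box_hom a b \<Longrightarrow> box_comp a a b f (box_id a) = f"
  using box_homD(1) by (intro box_comp_eqI) (auto simp: box_id_apply PiE_iff)

lemma box_comp_assoc:
  "f \<in> box_hom a b \<Longrightarrow>
     box_comp a c d h (box_comp a b c g f) = box_comp a b d (box_comp b c d h g) f"
  unfolding box_comp_def by (rule compose_assoc) (use box_homD(1) in blast)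

lemma box_is_category: "is_category UNIV box_hom box_comp box_id"
  unfolding is_category_def
  by (simp add: box_id_hom box_comp_hom box_comp_id_left box_comp_id_right box_comp_assoc)

lemma box_id_image: "box_id a ` cube a = cube a"
  by (simp add: box_id_def)

lemma box_surj_id: "box_surj a a (box_id a)"
  by (simp add: box_surj_def box_id_hom box_id_image)

lemma box_inj_id: "box_inj a a (box_id a)"
  by (simp add: box_inj_def box_id_hom inj_on_def box_id_apply)

lemma box_surj_comp: "box_surj a b f \<Longrightarrow> box_surj b c g \<Longrightarrow> box_surj a c (box_comp a b c g f)"
  unfolding box_surj_def by (simp add: box_comp_hom box_comp_image)

lemma box_inj_comp:
  assumes "box_inj a b f" "box_inj b c g"
  shows "box_inj a c (box_comp a b c g f)"
proof -
  have "f ` cube a \<subseteq> cube b" using assms(1) box_homD(1) by (auto simp: box_inj_def)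
  with assms have "inj_on (g \<circ> f) (cube a)"
    by (intro comp_inj_on) (auto simp: box_inj_def intro: inj_on_subset)
  then have "inj_on (box_comp a b c g f) (cube a)"
    by (rule inj_on_cong[THEN iffD1, rotated]) (simp add: box_comp_apply)
  with assms show ?thesis by (simp add: box_inj_def box_comp_hom)
qed

lemma box_surj_cancel:
  assumes "box_surj a b p" "g \<in> box_hom b c" "h \<in> box_hom b c"
    and "box_comp a b c g p = box_comp a b c h p"
  shows "g = h"
proof (rule box_hom_eqI[OF assms(2,3)])
  fix y assume "y \<in> cube b"
  then obtain x where "x \<in> cube a" "y = p x" using assms(1) by (auto simp: box_surj_def)
  then show "g y = h y" using assms(4) by (metis box_comp_apply)
qed

lemma box_inj_cancel:
  assumes "box_inj b c i" "g \<in> box_hom a b" "h \<in> box_hom a b"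
    and "box_comp a b c i g = box_comp a b c i h"
  shows "g = h"
proof (rule box_hom_eqI[OF assms(2,3)])
  fix x assume x: "x \<in> cube a"
  then have "i (g x) = i (h x)" using assms(4) by (metis box_comp_apply)
  moreover have "g x \<in> cube b" "h x \<in> cube b" using x assms(2,3) box_homD(1) by blast+
  ultimately show "g x = h x" using assms(1) by (auto simp: box_inj_def dest: inj_onD)
qed

text \<open>The lift inv_into i \<circ> f preserves intervals because the image of i is itself an
  interval, on which inv_into i is an order embedding.\<close>

lemma box_hom_lift:
  assumes i: "box_inj b c i" and f: "f \<in> box_hom a c" and img: "f ` cube a \<subseteq> i ` cube b"
  shows "\<exists>p \<in> box_hom a b. box_comp a b c i p = f"
proof -
  define j where "j = inv_into (cube b) i"
  define p where "p = restrict (\<lambda>v. j (f v)) (cube a)"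
  have ih: "i \<in> box_hom b c" and inj: "inj_on i (cube b)" using i by (auto simp: box_inj_def)
  have emb: "order_embedding_on (i ` cube b) j"
    unfolding j_def by (rule order_embedding_on_inv_into[OF box_inj_order_embedding[OF i]])
  have j_img: "j ` i ` cube b = cube b" unfolding j_def using inj by simp
  obtain x z where ib: "i ` cube b = cinterval c x z" using box_hom_image[OF ih] by blast
  have fv: "f v \<in> i ` cube b" if "v \<in> cube a" for v using img that by blast
  have "p \<in> box_hom a b"
    unfolding box_hom_iff
  proof (intro conjI ballI impI)
    show "p \<in> cube a \<rightarrow>\<^sub>E cube b" using fv j_img by (auto simp: p_def)
    fix s t assume st: "s \<in> cube a" "t \<in> cube a" "cleq s t"
    have "p ` cinterval a s t = j ` f ` cinterval a s t"
      using cinterval_subset_cube by (force simp: p_def)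
    also have "\<dots> = j ` cinterval c (f s) (f t)" using box_hom_image_cinterval[OF f st] by simp
    also have "\<dots> = cinterval b (j (f s)) (j (f t))"
    proof (rule order_embedding_image_cinterval[OF emb])
      show "i ` cube b \<subseteq> cube c" "j ` i ` cube b \<subseteq> cube b"
        using ib j_img by (simp_all add: cinterval_subset_cube)
      show "f s \<in> i ` cube b" "f t \<in> i ` cube b" using fv st by blast+
      then show "cinterval c (f s) (f t) \<subseteq> i ` cube b"
        unfolding ib by (rule cinterval_subset_cinterval)
      show "cinterval b (j (f s)) (j (f t)) \<subseteq> j ` i ` cube b"
        unfolding j_img by (rule cinterval_subset_cube)
    qed
    finally show "p ` cinterval a s t = cinterval b (p s) (p t)" using st by (simp add: p_def)
  qed
  moreover have "box_comp a b c i p = f"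
  proof (rule box_comp_eqI)
    show "f \<in> extensional (cube a)" using box_homD(1)[OF f] by (simp add: PiE_iff)
    fix v assume "v \<in> cube a"
    then show "i (p v) = f v" using fv by (simp add: p_def j_def f_inv_into_f)
  qed
  ultimately show ?thesis by blast
qed

lemma box_surj_of_image_eq:
  assumes "box_inj b c i" "p \<in> box_hom a b" "box_comp a b c i p ` cube a = i ` cube b"
  shows "box_surj a b p"
proof -
  have "i ` p ` cube a = i ` cube b" using assms(3) by (simp add: box_comp_image)
  moreover have "p ` cube a \<subseteq> cube b" using box_homD(1)[OF assms(2)] by blast
  ultimately have "p ` cube a = cube b"
    using assms(1) inj_on_image_eq_iff[of i "cube b" "p ` cube a" "cube b"]
    by (simp add: box_inj_def)
  with assms(2) show ?thesis by (simp add: box_surj_def)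
qed

lemma box_iso_iff: "is_iso box_hom box_comp box_id a b f \<longleftrightarrow> box_surj a b f \<and> box_inj a b f"
proof
  assume "is_iso box_hom box_comp box_id a b f"
  then obtain g where f: "f \<in> box_hom a b" and g: "g \<in> box_hom b a"
    and gf: "box_comp a b a g f = box_id a" and fg: "box_comp b a b f g = box_id b"
    unfolding is_iso_def by blast
  have "g (f x) = x" if "x \<in> cube a" for x using gf that by (metis box_comp_apply box_id_apply)
  then have "inj_on f (cube a)" by (rule inj_on_inverseI)
  moreover have "f ` cube a = cube b"
  proof
    show "f ` cube a \<subseteq> cube b" using box_homD(1)[OF f] by auto
    show "cube b \<subseteq> f ` cube a"
    proof
      fix y assume y: "y \<in> cube b"
      then have "f (g y) = y" using fg by (metis box_comp_apply box_id_apply)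
      moreover have "g y \<in> cube a" using y box_homD(1)[OF g] by auto
      ultimately show "y \<in> f ` cube a" by (metis image_eqI)
    qed
  qed
  ultimately show "box_surj a b f \<and> box_inj a b f" using f by (simp add: box_surj_def box_inj_def)
next
  assume bij: "box_surj a b f \<and> box_inj a b f"
  then have f: "f \<in> box_hom a b" and inj: "inj_on f (cube a)" and onto: "f ` cube a = cube b"
    by (auto simp: box_surj_def box_inj_def)
  obtain g where g: "g \<in> box_hom b a" and fg: "box_comp b a b f g = box_id b"
    using box_hom_lift[where i = f and f = "box_id b" and a = b and b = a and c = b]
      bij box_id_hom onto by (auto simp: box_id_image)
  have "box_comp a b a g f = box_id a"
  proof (rule box_comp_eqI)
    show "box_id a \<in> extensional (cube a)" by (simp add: box_id_def)
    fix x assume x: "x \<in> cube a"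
    then have "f x \<in> cube b" "g (f x) \<in> cube a" using f g box_homD(1) by blast+
    moreover have "f (g (f x)) = f x"
      using fg \<open>f x \<in> cube b\<close> by (metis box_comp_apply box_id_apply)
    ultimately show "g (f x) = box_id a x" using inj x by (simp add: box_id_apply inj_on_eq_iff)
  qed
  with f g fg show "is_iso box_hom box_comp box_id a b f" unfolding is_iso_def by blast
qed

section \<open>Faces and the factorization of box morphisms\<close>

text \<open>For x \<le> z the interval [x, z] is a copy of [1]^(face_dim x z): face_incl x z w
  fills the coordinates in which x and z differ with the entries of w, and face_proj x z y
  reads these coordinates off y.\<close>

fun face_dim :: "bool list \<Rightarrow> bool list \<Rightarrow> nat" where
  "face_dim (a # x) (b # z) = (if a = b then face_dim x z else Suc (face_dim x z))"
| "face_dim _ _ = 0"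

fun face_incl :: "bool list \<Rightarrow> bool list \<Rightarrow> bool list \<Rightarrow> bool list" where
  "face_incl (a # x) (b # z) w =
     (if a = b then a # face_incl x z w else hd w # face_incl x z (tl w))"
| "face_incl _ _ _ = []"

fun face_proj :: "bool list \<Rightarrow> bool list \<Rightarrow> bool list \<Rightarrow> bool list" where
  "face_proj (a # x) (b # z) (c # y) = (if a = b then face_proj x z y else c # face_proj x z y)"
| "face_proj _ _ _ = []"

lemma length_face_incl: "length (face_incl x z w) = min (length x) (length z)"
  by (induction x z w rule: face_incl.induct) auto

lemma length_face_proj:
  "length x = length z \<Longrightarrow> length y = length x \<Longrightarrow> length (face_proj x z y) = face_dim x z"
  by (induction x z y rule: face_proj.induct) auto

lemma face_incl_face_proj: "cleq x y \<Longrightarrow> cleq y z \<Longrightarrow> face_incl x z (face_proj x z y) = y"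
proof (induction x arbitrary: y z)
  case (Cons a x)
  then show ?case by (cases y; cases z) auto
qed simp

lemma face_incl_bounds:
  "cleq x z \<Longrightarrow> length w = face_dim x z \<Longrightarrow> cleq x (face_incl x z w) \<and> cleq (face_incl x z w) z"
proof (induction x arbitrary: z w)
  case (Cons a x)
  then show ?case by (cases z; cases w) (auto split: if_splits)
qed simp

lemma cleq_face_incl_iff:
  "length x = length z \<Longrightarrow> length w = face_dim x z \<Longrightarrow> length w' = face_dim x z \<Longrightarrow>
     cleq (face_incl x z w) (face_incl x z w') \<longleftrightarrow> cleq w w'"
proof (induction x arbitrary: z w w')
  case (Cons a x)
  then show ?case by (cases z; cases w; cases w') (auto split: if_splits)
qed simp

lemma face_incl_image:
  assumes "x \<in> cube c" "cleq x z"
  shows "face_incl x z ` cube (face_dim x z) = cinterval c x z"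
proof
  show "face_incl x z ` cube (face_dim x z) \<subseteq> cinterval c x z"
    using assms face_incl_bounds cleq_length
    by (auto simp: cinterval_def cube_def length_face_incl)
  show "cinterval c x z \<subseteq> face_incl x z ` cube (face_dim x z)"
  proof
    fix y assume "y \<in> cinterval c x z"
    then have y: "cleq x y" "cleq y z" by (simp_all add: cinterval_def)
    then have "face_proj x z y \<in> cube (face_dim x z)"
      using cleq_length by (simp add: cube_def length_face_proj)
    with y show "y \<in> face_incl x z ` cube (face_dim x z)"
      by (metis face_incl_face_proj image_eqI)
  qed
qed

lemma box_inj_face_incl:
  assumes "x \<in> cube c" "cleq x z"
  shows "box_inj (face_dim x z) c (restrict (face_incl x z) (cube (face_dim x z)))"
    (is "box_inj ?k c ?i")
proof -
  have emb: "order_embedding_on (cube ?k) ?i"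
    using assms cleq_length by (simp add: order_embedding_on_def cube_def cleq_face_incl_iff)
  have img: "?i ` cube ?k = cinterval c x z" using face_incl_image[OF assms] by simp
  have "face_incl x z \<in> cube ?k \<rightarrow> cube c"
    using face_incl_image[OF assms] cinterval_subset_cube by blast
  then have "?i \<in> cube ?k \<rightarrow>\<^sub>E cube c" by simp
  then have "?i \<in> box_hom ?k c" using emb img by (rule box_hom_of_order_embedding)
  with order_embedding_on_inj_on[OF emb] show ?thesis by (simp add: box_inj_def)
qed

lemma box_factorization:
  assumes f: "f \<in> box_hom a c"
  shows "\<exists>b p i. box_surj a b p \<and> box_inj b c i \<and> box_comp a b c i p = f"
proof -
  define x where "x = f (replicate a False)"
  define z where "z = f (replicate a True)"
  have img: "f ` cube a = cinterval c x z" using box_hom_image[OF f] by (simp add: x_def z_def)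
  have "replicate a False \<in> cube a" "replicate a True \<in> cube a"
    "cleq (replicate a False) (replicate a True)" by (simp_all add: cube_def cleq_iff_nth)
  then have xz: "x \<in> cube c" "cleq x z" using box_homD(1,2)[OF f] by (auto simp: x_def z_def)
  define k where "k = face_dim x z"
  define i where "i = restrict (face_incl x z) (cube k)"
  have i: "box_inj k c i" unfolding i_def k_def using xz by (rule box_inj_face_incl)
  have i_img: "i ` cube k = f ` cube a" using face_incl_image[OF xz] img by (simp add: i_def k_def)
  then obtain p where p: "p \<in> box_hom a k" "box_comp a k c i p = f"
    using box_hom_lift[OF i f] by auto
  have "box_surj a k p" using box_surj_of_image_eq[OF i p(1)] i_img p(2) by simp
  with i p(2) show ?thesis by blast
qed

lemma box_factorization_unique:
  assumes p: "box_surj a b p" and i: "box_inj b c i" and p': "box_surj a b' p'" and i': "box_inj b' c i'"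
    and eq: "box_comp a b c i p = box_comp a b' c i' p'"
  shows "\<exists>\<theta>. is_iso box_hom box_comp box_id b b' \<theta> \<and> box_comp a b b' \<theta> p = p' \<and> box_comp b b' c i' \<theta> = i"
proof -
  have img: "i ` cube b = i' ` cube b'"
    using p p' box_comp_image[of a b c i p] box_comp_image[of a b' c i' p']
    by (simp add: eq box_surj_def)
  have ih: "i \<in> box_hom b c" and inj: "inj_on i (cube b)" using i by (auto simp: box_inj_def)
  obtain \<theta> where \<theta>: "\<theta> \<in> box_hom b b'" "box_comp b b' c i' \<theta> = i"
    using box_hom_lift[OF i' ih] img by auto
  have "box_surj b b' \<theta>" using box_surj_of_image_eq[OF i' \<theta>(1)] \<theta>(2) img by simp
  moreover have "inj_on \<theta> (cube b)"
  proof (rule inj_onI)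
    fix u v assume "u \<in> cube b" "v \<in> cube b" "\<theta> u = \<theta> v"
    then show "u = v" using \<theta>(2) inj by (metis box_comp_apply inj_onD)
  qed
  ultimately have iso: "is_iso box_hom box_comp box_id b b' \<theta>"
    using \<theta>(1) by (simp add: box_iso_iff box_inj_def)
  have ph: "p \<in> box_hom a b" and ph': "p' \<in> box_hom a b'" using p p' by (auto simp: box_surj_def)
  have "box_comp a b' c i' (box_comp a b b' \<theta> p) = box_comp a b' c i' p'"
    using box_comp_assoc[OF ph, where c = b' and d = c and h = i' and g = \<theta>] \<theta>(2) eq by simp
  then have "box_comp a b b' \<theta> p = p'"
    using box_inj_cancel[OF i' box_comp_hom[OF ph \<theta>(1)] ph'] by blast
  with iso \<theta>(2) show ?thesis by blast
qed

lemma box_surj_dim_le: "box_surj a b f \<Longrightarrow> b \<le> a"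
  using card_image_le[OF finite_cube, of f a] by (simp add: box_surj_def card_cube)

lemma box_inj_dim_le:
  assumes "box_inj a b f" shows "a \<le> b"
proof -
  have "f ` cube a \<subseteq> cube b" using assms box_homD(1) by (auto simp: box_inj_def)
  then have "card (cube a) \<le> card (cube b)"
    using assms card_inj_on_le[OF _ _ finite_cube] by (auto simp: box_inj_def)
  then show ?thesis by (simp add: card_cube)
qed

lemma box_surj_endo_imp_inj: "box_surj a a f \<Longrightarrow> box_inj a a f"
  using eq_card_imp_inj_on[OF finite_cube, of f a] by (simp add: box_surj_def box_inj_def)

lemma box_inj_endo_imp_surj:
  assumes "box_inj a a f" shows "box_surj a a f"
proof -
  have "f ` cube a \<subseteq> cube a" using assms box_homD(1) by (auto simp: box_inj_def)
  with assms show ?thesis using endo_inj_surj[OF finite_cube] by (simp add: box_surj_def box_inj_def)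
qed

theorem mainTheorem11:
  shows "gen_reedy (UNIV :: nat set) box_hom box_comp box_id box_surj box_inj (\<lambda>n. n)"
proof -
  have "wide_subcat UNIV box_hom box_comp box_id box_surj"
    unfolding wide_subcat_def using box_surj_id box_surj_comp by (auto simp: box_surj_def)
  moreover have "wide_subcat UNIV box_hom box_comp box_id box_inj"
    unfolding wide_subcat_def using box_inj_id box_inj_comp by (auto simp: box_inj_def)
  moreover have "g = box_id b"
    if z: "box_surj a b z" and g: "is_iso box_hom box_comp box_id b b g"
      and gz: "box_comp a b b g z = z" for a b z g
  proof (rule box_surj_cancel[OF z])
    show "g \<in> box_hom b b" using g by (simp add: is_iso_def)
    show "box_id b \<in> box_hom b b" by (rule box_id_hom)
    show "box_comp a b b g z = box_comp a b b (box_id b) z"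
      using gz z box_comp_id_left by (simp add: box_surj_def)
  qed
  ultimately show ?thesis
    unfolding gen_reedy_def
    using box_is_category box_surj_dim_le box_inj_dim_le
      box_surj_endo_imp_inj box_inj_endo_imp_surj box_factorization box_factorization_unique
    by (auto simp: box_iso_iff)
qed

end
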